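(* In the setting of the context, assume $\mathbf{A}$ and $\tilde{\mathbf{A}}$ are invertible, $\mathbf{Q}_\Delta$ is given by the LU trick, and the number $M$ of quadrature nodes satisfies $M\le M^*$, where $M^*$ (depending on the matrix norm) is such that the modified smoother $\mathbf{T}_2=\mathbf{I}_{LMN}-\hat{\mathbf{P}}_2^{-1}\mathbf{C}$ satisfies the smoothing property $\|\mathbf{C}\mathbf{T}_2^k\|\le c\sqrt{8/(k\pi)}\,\mu$ for all $k$ and all sufficiently large $\mu$. Let $\mathbf{T}_{\mathrm{PFASST}}(\mu,k)=\big(\mathbf{I}_{LMN}-\mathbf{T}_C^F\tilde{\mathbf{P}}^{-1}\mathbf{T}_F^C\mathbf{C}\big)\big(\mathbf{I}_{LMN}-\hat{\mathbf{P}}_2^{-1}\mathbf{C}\big)^k$ be the iteration matrix of PFASST with $k$ modified approximative block Jacobi pre-smoothing steps. Then there exist $c>0$ and $\mu^*>0$ such that for all $k\in\mathbb{N}$ and all $\mu\ge\mu^*$, $$\big\|\mathbf{T}_{\mathrm{PFASST}}(\mu,k)\big\|\le g(k),\qquad g(k)=c\,k^{-1/2}\to0\ (k\to\infty),$$ independently of $\mu$.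
   Context: Fix positive integers $L,M,N$ and coarse sizes $\tilde M\le M$, $\tilde N\le N$. $\mathbf{Q}=(q_{m,j})\in\mathbb{R}^{M\times M}$ with $q_{m,j}=\int_0^{\tau_m}\ell_j(s)\,ds$ is the collocation matrix for the (right) Gauss–Radau nodes $0<\tau_1<\dots<\tau_M=1$ on $[0,1]$. LU trick: $\mathbf{Q}^T=\mathbf{L}_Q\mathbf{U}_Q$ with $\mathbf{L}_Q$ unit lower triangular, $\mathbf{U}_Q$ upper triangular, $\mathbf{Q}_\Delta=\mathbf{U}_Q^T$. $\tilde{\mathbf{Q}}_\Delta\in\mathbb{R}^{\tilde M\times\tilde M}$ is the lower-triangular weight matrix of a simpler quadrature rule on the coarse nodes, assumed invertible (standing assumption of the stiff-limit analysis). $\mathbf{A}\in\mathbb{C}^{N\times N}$, $\tilde{\mathbf{A}}\in\mathbb{C}^{\tilde N\times\tilde N}$, $\mu>0$. $\mathbf{N}_M$, $\tilde{\mathbf{N}}_{\tilde M}$ are the $M\times M$, $\tilde M\times\tilde M$ matrices with ones in the last column and zeros elsewhere; $\mathbf{H}=\mathbf{N}_M\otimes\mathbf{I}_N$, $\tilde{\mathbf{H}}=\tilde{\mathbf{N}}_{\tilde M}\otimes\mathbf{I}_{\tilde N}$; $\mathbf{E}\in\mathbb{R}^{L\times L}$ has ones on the first subdiagonal and zeros elsewhere. $\mathbf{C}=\mathbf{I}_{LMN}-\mu\,\mathbf{I}_L\otimes\mathbf{Q}\otimes\mathbf{A}-\mathbf{E}\otimes\mathbf{H}$, modified fine preconditioner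 $\hat{\mathbf{P}}_2=\mathbf{I}_{LMN}-\mu\,\mathbf{I}_L\otimes2\mathbf{Q}_\Delta\otimes\mathbf{A}$, coarse preconditioner $\tilde{\mathbf{P}}=\mathbf{I}_{L\tilde M\tilde N}-\mu\,\mathbf{I}_L\otimes\tilde{\mathbf{Q}}_\Delta\otimes\tilde{\mathbf{A}}-\mathbf{E}\otimes\tilde{\mathbf{H}}$ (both invertible). $\mathbf{T}_F^C=\mathbf{I}_L\otimes\mathbf{T}_{F,Q}^C\otimes\mathbf{T}_{F,A}^C\in\mathbb{R}^{L\tilde M\tilde N\times LMN}$, $\mathbf{T}_C^F=\mathbf{I}_L\otimes\mathbf{T}_{C,Q}^F\otimes\mathbf{T}_{C,A}^F\in\mathbb{R}^{LMN\times L\tilde M\tilde N}$, with $(\mathbf{E}\otimes\tilde{\mathbf{H}})\mathbf{T}_F^C=\mathbf{T}_F^C(\mathbf{E}\otimes\mathbf{H})$. $\|\cdot\|$ is an induced matrix norm. *)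

theory Defs
  imports "HOL-Analysis.Analysis" "Jordan_Normal_Form.Matrix" "Jordan_Normal_Form.Gauss_Jordan_Elimination"
    "HOL-Computational_Algebra.Polynomial"
begin

text \<open>Kronecker product (row-major block convention: (A kron B) has blocks A(i,j) B).\<close>
definition kron :: "'a::times mat \<Rightarrow> 'a mat \<Rightarrow> 'a mat" where
  "kron A B = mat (dim_row A * dim_row B) (dim_col A * dim_col B)
     (\<lambda>(i,j). A $$ (i div dim_row B, j div dim_col B) * B $$ (i mod dim_row B, j mod dim_col B))"

definition minv :: "'a::field mat \<Rightarrow> 'a mat" where
  "minv A = the (mat_inverse A)"

definition cmat :: "real mat \<Rightarrow> complex mat" where
  "cmat A = map_mat complex_of_real A"

definition lower_triangular :: "'a::zero mat \<Rightarrow> bool" where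
  "lower_triangular A \<longleftrightarrow> (\<forall>i<dim_row A. \<forall>j<dim_col A. i < j \<longrightarrow> A $$ (i,j) = 0)"

definition unit_lower_triangular :: "'a::{zero,one} mat \<Rightarrow> bool" where
  "unit_lower_triangular A \<longleftrightarrow> lower_triangular A \<and> (\<forall>i<dim_row A. A $$ (i,i) = 1)"

definition shiftE :: "nat \<Rightarrow> 'a::{zero,one} mat" where
  "shiftE L = mat L L (\<lambda>(i,j). if i = Suc j then 1 else 0)"

definition lastcolN :: "nat \<Rightarrow> 'a::{zero,one} mat" where
  "lastcolN M = mat M M (\<lambda>(i,j). if j = M - 1 then 1 else 0)"

definition Hmat :: "nat \<Rightarrow> nat \<Rightarrow> complex mat" where
  "Hmat M N = kron (lastcolN M) (1\<^sub>m N)"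

text \<open>Nodes indexed 0..M-1 (tau_1..tau_M in the paper).\<close>
definition lagrange_basis :: "nat \<Rightarrow> (nat \<Rightarrow> real) \<Rightarrow> nat \<Rightarrow> real \<Rightarrow> real" where
  "lagrange_basis M \<tau> j s = (\<Prod>i\<in>{..<M} - {j}. (s - \<tau> i) / (\<tau> j - \<tau> i))"

definition radau_right_nodes :: "nat \<Rightarrow> (nat \<Rightarrow> real) \<Rightarrow> bool" where
  "radau_right_nodes M \<tau> \<longleftrightarrow>
     (\<forall>i j. i < j \<and> j < M \<longrightarrow> \<tau> i < \<tau> j) \<and> 0 < \<tau> 0 \<and> \<tau> (M - 1) = 1 \<and>
     (\<forall>p :: real poly. degree p \<le> 2 * M - 2 \<longrightarrow>
        (\<Sum>j<M. integral {0..1} (lagrange_basis M \<tau> j) * poly p (\<tau> j)) = integral {0..1} (poly p))"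

definition collocQ :: "nat \<Rightarrow> (nat \<Rightarrow> real) \<Rightarrow> real mat" where
  "collocQ M \<tau> = mat M M (\<lambda>(m,j). integral {0..\<tau> m} (lagrange_basis M \<tau> j))"

definition is_vec_norm :: "nat \<Rightarrow> (complex vec \<Rightarrow> real) \<Rightarrow> bool" where
  "is_vec_norm n nv \<longleftrightarrow>
     (\<forall>v\<in>carrier_vec n. 0 \<le> nv v \<and> (nv v = 0 \<longleftrightarrow> v = 0\<^sub>v n)) \<and>
     (\<forall>a. \<forall>v\<in>carrier_vec n. nv (a \<cdot>\<^sub>v v) = cmod a * nv v) \<and>
     (\<forall>u\<in>carrier_vec n. \<forall>v\<in>carrier_vec n. nv (u + v) \<le> nv u + nv v)"

definition induced_norm :: "(complex vec \<Rightarrow> real) \<Rightarrow> nat \<Rightarrow> complex mat \<Rightarrow> real" where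
  "induced_norm nv n B = Sup {nv (B *\<^sub>v v) / nv v | v. v \<in> carrier_vec n \<and> v \<noteq> 0\<^sub>v n}"

definition Cmat :: "nat \<Rightarrow> nat \<Rightarrow> nat \<Rightarrow> real mat \<Rightarrow> complex mat \<Rightarrow> real \<Rightarrow> complex mat" where
  "Cmat L M N Q A \<mu> = 1\<^sub>m (L*M*N) - complex_of_real \<mu> \<cdot>\<^sub>m kron (1\<^sub>m L) (kron (cmat Q) A)
                        - kron (shiftE L) (Hmat M N)"

definition P2hat :: "nat \<Rightarrow> nat \<Rightarrow> nat \<Rightarrow> real mat \<Rightarrow> complex mat \<Rightarrow> real \<Rightarrow> complex mat" where
  "P2hat L M N QD A \<mu> = 1\<^sub>m (L*M*N) - complex_of_real \<mu> \<cdot>\<^sub>m kron (1\<^sub>m L) (kron (cmat (2 \<cdot>\<^sub>m QD)) A)"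

definition Ptilde :: "nat \<Rightarrow> nat \<Rightarrow> nat \<Rightarrow> real mat \<Rightarrow> complex mat \<Rightarrow> real \<Rightarrow> complex mat" where
  "Ptilde L Mt Nt QDt At \<mu> = 1\<^sub>m (L*Mt*Nt) - complex_of_real \<mu> \<cdot>\<^sub>m kron (1\<^sub>m L) (kron (cmat QDt) At)
                        - kron (shiftE L) (Hmat Mt Nt)"

definition T2mat :: "nat \<Rightarrow> nat \<Rightarrow> nat \<Rightarrow> real mat \<Rightarrow> real mat \<Rightarrow> complex mat \<Rightarrow> real \<Rightarrow> complex mat" where
  "T2mat L M N Q QD A \<mu> = 1\<^sub>m (L*M*N) - minv (P2hat L M N QD A \<mu>) * Cmat L M N Q A \<mu>"

definition Tpfasst :: "nat \<Rightarrow> nat \<Rightarrow> nat \<Rightarrow> nat \<Rightarrow> nat \<Rightarrow> real mat \<Rightarrow> real mat \<Rightarrow> real mat \<Rightarrow>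
    complex mat \<Rightarrow> complex mat \<Rightarrow> complex mat \<Rightarrow> complex mat \<Rightarrow> real \<Rightarrow> nat \<Rightarrow> complex mat" where
  "Tpfasst L M N Mt Nt Q QD QDt A At TCF TFC \<mu> k =
     (1\<^sub>m (L*M*N) - TCF * minv (Ptilde L Mt Nt QDt At \<mu>) * TFC * Cmat L M N Q A \<mu>)
     * (T2mat L M N Q QD A \<mu>) ^\<^sub>m k"

end

theory Submission
  imports Defs "Jordan_Normal_Form.Determinant"
begin

text \<open>
  All norms on \<open>\<complex>\<^sup>n\<close> are equivalent, so every estimate can be made for the sum of the
  moduli of the entries. The fine operator \<open>C\<close> and the coarse preconditioner \<open>P\<close> have the form
  \<open>I - \<mu> (I \<otimes> X \<otimes> A) - R\<close> with \<open>X \<otimes> A\<close> invertible (\<open>X = Q\<close> because the Radau nodes are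
  distinct and positive), so for large \<open>\<mu>\<close> their inverses have norm \<open>O(1/\<mu>)\<close>; the same
  holds for the smoother's preconditioner, \<open>Q\<^sub>\<Delta>\<close> being a factor of an LU decomposition of \<open>Q\<^sup>T\<close>.
  Writing the PFASST iteration matrix as \<open>(C\<^sup>-\<^sup>1 - T\<^sub>C\<^sup>F P\<^sup>-\<^sup>1 T\<^sub>F\<^sup>C) C T\<^sub>2\<^sup>k\<close> therefore gives
  \<open>\<parallel>T\<parallel> \<le> (G/\<mu>) \<parallel>C T\<^sub>2\<^sup>k\<parallel>\<close>, and the smoothing property \<open>\<parallel>C T\<^sub>2\<^sup>k\<parallel> \<le> c \<surd>(8/(k\<pi>)) \<mu>\<close> cancels
  the factor \<open>\<mu>\<close>.
\<close>

lemma dim_kron [simp]: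
  "dim_row (kron A B) = dim_row A * dim_row B" "dim_col (kron A B) = dim_col A * dim_col B"
  by (simp_all add: kron_def)

lemma kron_carrier_mat:
  "A \<in> carrier_mat a b \<Longrightarrow> B \<in> carrier_mat p q \<Longrightarrow> kron A B \<in> carrier_mat (a * p) (b * q)"
  by auto

lemma index_kron:
  "i < dim_row A * dim_row B \<Longrightarrow> j < dim_col A * dim_col B \<Longrightarrow>
   kron A B $$ (i, j) = A $$ (i div dim_row B, j div dim_col B) * B $$ (i mod dim_row B, j mod dim_col B)"
  by (simp add: kron_def)

lemma kron_mult:
  fixes A B C D :: "'a::comm_ring_1 mat"
  assumes A: "A \<in> carrier_mat a b" and B: "B \<in> carrier_mat p q"
    and C: "C \<in> carrier_mat b c" and D: "D \<in> carrier_mat q d"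
  shows "kron A B * kron C D = kron (A * C) (B * D)"
proof (rule eq_matI)
  fix i j assume "i < dim_row (kron (A * C) (B * D))" "j < dim_col (kron (A * C) (B * D))"
  then have i: "i < a * p" and j: "j < c * d" using A B C D by auto
  then have "0 < p" "0 < d" by (auto intro!: gr0I)
  have entry: "kron A B $$ (i, k2 + k1 * q) * kron C D $$ (k2 + k1 * q, j) =
      (A $$ (i div p, k1) * C $$ (k1, j div d)) * (B $$ (i mod p, k2) * D $$ (k2, j mod d))"
    if "k1 < b" "k2 < q" for k1 k2
  proof -
    have "k2 + k1 * q < b * q"
      using that by (metis add.commute add_less_cancel_left less_le_trans mult.commute mult_Suc_right
          mult_le_mono2 Suc_leI)
    then show ?thesis using i j that A B C D by (simp add: index_kron mult_ac)
  qed
  have "(kron A B * kron C D) $$ (i, j) = (\<Sum>k<b * q. kron A B $$ (i, k) * kron C D $$ (k, j))"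
    using i j A B C D by (simp add: scalar_prod_def lessThan_atLeast0)
  also have "\<dots> = (\<Sum>k1<b. A $$ (i div p, k1) * C $$ (k1, j div d)) *
                   (\<Sum>k2<q. B $$ (i mod p, k2) * D $$ (k2, j mod d))"
    by (simp add: sum_mult_product entry sum_product)
  also have "\<dots> = kron (A * C) (B * D) $$ (i, j)"
    using i j A B C D \<open>0 < p\<close> \<open>0 < d\<close>
    by (simp add: index_kron scalar_prod_def lessThan_atLeast0 less_mult_imp_div_less)
  finally show "(kron A B * kron C D) $$ (i, j) = kron (A * C) (B * D) $$ (i, j)" .
qed (use A B C D in auto)

lemma kron_one: "kron (1\<^sub>m a) (1\<^sub>m b) = (1\<^sub>m (a * b) :: 'a::comm_ring_1 mat)"
proof (rule eq_matI)
  fix i j assume "i < dim_row (1\<^sub>m (a * b) :: 'a mat)" "j < dim_col (1\<^sub>m (a * b) :: 'a mat)"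
  then have i: "i < a * b" and j: "j < a * b" by auto
  then have "0 < b" by (auto intro!: gr0I)
  have "(i div b = j div b \<and> i mod b = j mod b) = (i = j)"
    by (metis div_mult_mod_eq)
  then show "kron (1\<^sub>m a) (1\<^sub>m b) $$ (i, j) = (1\<^sub>m (a * b) :: 'a mat) $$ (i, j)"
    using i j \<open>0 < b\<close> by (auto simp: index_kron less_mult_imp_div_less)
qed auto

lemma kron_left_inverse:
  fixes A1 A2 B1 B2 :: "'a::comm_ring_1 mat"
  assumes "A1 \<in> carrier_mat m m" "B1 \<in> carrier_mat m m" "B1 * A1 = 1\<^sub>m m"
    and "A2 \<in> carrier_mat n n" "B2 \<in> carrier_mat n n" "B2 * A2 = 1\<^sub>m n"
  shows "kron B1 B2 * kron A1 A2 = 1\<^sub>m (m * n)"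
  using assms by (simp add: kron_mult kron_one)

lemma dim_cmat [simp]: "dim_row (cmat A) = dim_row A" "dim_col (cmat A) = dim_col A"
  by (auto simp: cmat_def)

lemma cmat_carrier_mat: "A \<in> carrier_mat m n \<Longrightarrow> cmat A \<in> carrier_mat m n"
  by auto

lemma cmat_mult: "A \<in> carrier_mat a b \<Longrightarrow> B \<in> carrier_mat b c \<Longrightarrow> cmat (A * B) = cmat A * cmat B"
  by (intro eq_matI) (auto simp: cmat_def scalar_prod_def)

lemma cmat_one [simp]: "cmat (1\<^sub>m n) = 1\<^sub>m n"
  by (intro eq_matI) (auto simp: cmat_def)

lemma det_nonzero_if_invertible_mat:
  fixes A :: "'a::comm_ring_1 mat"
  assumes "A \<in> carrier_mat n n" "invertible_mat A"
  shows "det A \<noteq> 0"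
proof -
  obtain B where AB: "A * B = 1\<^sub>m (dim_row A)" and BA: "B * A = 1\<^sub>m (dim_row B)"
    using assms(2) unfolding invertible_mat_def inverts_mat_def by blast
  have "B \<in> carrier_mat n n"
    using arg_cong[OF AB, of dim_col] arg_cong[OF BA, of dim_col] assms(1) by auto
  then have "det B * det A = 1"
    using assms(1) BA det_mult[of B n A] by simp
  then show ?thesis by auto
qed

lemma minv_if_det_nonzero:
  fixes A :: "'a::field mat"
  assumes A: "A \<in> carrier_mat n n" and "det A \<noteq> 0"
  shows "minv A \<in> carrier_mat n n" "A * minv A = 1\<^sub>m n" "minv A * A = 1\<^sub>m n"
proof -
  have "A \<in> Units (ring_mat TYPE('a) n ())" by (rule det_non_zero_imp_unit[OF A \<open>det A \<noteq> 0\<close>])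
  then obtain B where "mat_inverse A = Some B"
    using mat_inverse(1)[OF A, of "()"] by blast
  then show "minv A \<in> carrier_mat n n" "A * minv A = 1\<^sub>m n" "minv A * A = 1\<^sub>m n"
    using mat_inverse(2)[OF A] by (auto simp: minv_def)
qed

lemma left_inverse_if_det_nonzero:
  fixes A :: "'a::field mat"
  assumes "A \<in> carrier_mat n n" "det A \<noteq> 0"
  obtains B where "B \<in> carrier_mat n n" "B * A = 1\<^sub>m n"
  using minv_if_det_nonzero[OF assms] by blast

definition norm1 :: "complex vec \<Rightarrow> real" where
  "norm1 v = (\<Sum>i<dim_vec v. cmod (v $ i))"

definition entrywise_norm1 :: "complex mat \<Rightarrow> real" where
  "entrywise_norm1 A = (\<Sum>i<dim_row A. \<Sum>j<dim_col A. cmod (A $$ (i, j)))"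

lemma norm1_nonneg: "0 \<le> norm1 v"
  by (simp add: norm1_def sum_nonneg)

lemma entrywise_norm1_nonneg: "0 \<le> entrywise_norm1 A"
  by (simp add: entrywise_norm1_def sum_nonneg)

lemma norm_index_le_norm1: "i < dim_vec v \<Longrightarrow> cmod (v $ i) \<le> norm1 v"
  unfolding norm1_def by (rule member_le_sum) auto

lemma norm1_zero_vec [simp]: "norm1 (0\<^sub>v n) = 0"
  by (simp add: norm1_def)

lemma norm1_pos: "v \<noteq> 0\<^sub>v (dim_vec v) \<Longrightarrow> 0 < norm1 v"
  by (metis eq_vecI index_zero_vec norm_index_le_norm1 order.strict_trans2 zero_less_norm_iff)

lemma norm1_smult: "norm1 (a \<cdot>\<^sub>v v) = cmod a * norm1 v"
  by (simp add: norm1_def norm_mult sum_distrib_left)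

lemma norm1_minus_le: "dim_vec u = dim_vec v \<Longrightarrow> norm1 (u - v) \<le> norm1 u + norm1 v"
  unfolding norm1_def by (simp add: sum.distrib[symmetric] norm_triangle_ineq4 sum_mono)

lemma norm1_diff3_le:
  fixes x y z w :: "complex vec"
  assumes "dim_vec x = n" "dim_vec y = n" "dim_vec z = n" "dim_vec w = n"
    and "\<And>i. i < n \<Longrightarrow> x $ i = y $ i - z $ i - w $ i"
  shows "norm1 x \<le> norm1 y + norm1 z + norm1 w"
proof -
  have "cmod (y $ i - z $ i - w $ i) \<le> cmod (y $ i) + cmod (z $ i) + cmod (w $ i)" for i
    by (metis add_mono_thms_linordered_semiring(3) norm_triangle_ineq4 order_trans)
  then show ?thesis
    using assms by (simp add: norm1_def sum.distrib[symmetric] sum_mono)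
qed

lemma norm1_mult_mat_vec_le:
  assumes A: "A \<in> carrier_mat m n" and v: "v \<in> carrier_vec n"
  shows "norm1 (A *\<^sub>v v) \<le> entrywise_norm1 A * norm1 v"
proof -
  have "cmod (\<Sum>j<n. A $$ (i, j) * v $ j) \<le> (\<Sum>j<n. cmod (A $$ (i, j)) * norm1 v)" for i
    using v by (intro order.trans[OF norm_sum] sum_mono)
      (auto simp: norm_mult intro!: mult_left_mono norm_index_le_norm1)
  then have "norm1 (A *\<^sub>v v) \<le> (\<Sum>i<m. \<Sum>j<n. cmod (A $$ (i, j)) * norm1 v)"
    using A v by (auto simp: norm1_def scalar_prod_def lessThan_atLeast0 intro!: sum_mono)
  also have "\<dots> = entrywise_norm1 A * norm1 v"
    using A by (simp add: entrywise_norm1_def sum_distrib_right)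
  finally show ?thesis .
qed

lemma is_vec_normD:
  assumes "is_vec_norm n nv"
  shows "\<And>v. v \<in> carrier_vec n \<Longrightarrow> 0 \<le> nv v"
    and "\<And>v. v \<in> carrier_vec n \<Longrightarrow> nv v = 0 \<longleftrightarrow> v = 0\<^sub>v n"
    and "\<And>a v. v \<in> carrier_vec n \<Longrightarrow> nv (a \<cdot>\<^sub>v v) = cmod a * nv v"
    and "\<And>u v. u \<in> carrier_vec n \<Longrightarrow> v \<in> carrier_vec n \<Longrightarrow> nv (u + v) \<le> nv u + nv v"
  using assms unfolding is_vec_norm_def by blast+

lemma is_vec_norm_pos:
  "is_vec_norm n nv \<Longrightarrow> v \<in> carrier_vec n \<Longrightarrow> v \<noteq> 0\<^sub>v n \<Longrightarrow> 0 < nv v"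
  using is_vec_normD(1,2) by (metis order_less_le)

lemma vec_norm_le_norm1:
  assumes nv: "is_vec_norm n nv"
  obtains a where "0 < a" "\<And>v. v \<in> carrier_vec n \<Longrightarrow> nv v \<le> a * norm1 v"
proof -
  define s where "s = (\<Sum>i<n. nv (unit_vec n i))"
  have "0 \<le> s" unfolding s_def by (intro sum_nonneg is_vec_normD(1)[OF nv]) auto
  have "nv v \<le> s * norm1 v" if v: "v \<in> carrier_vec n" for v
  proof -
    define head where "head m = vec n (\<lambda>i. if i < m then v $ i else 0)" for m
    have "nv (head m) \<le> (\<Sum>i<m. cmod (v $ i) * nv (unit_vec n i))" if "m \<le> n" for m
      using that
    proof (induction m)
      case 0
      have "head 0 = 0\<^sub>v n" by (intro eq_vecI) (auto simp: head_def)
      then show ?case using is_vec_normD(2)[OF nv, of "0\<^sub>v n"] by simp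
    next
      case (Suc m)
      have "head (Suc m) = head m + v $ m \<cdot>\<^sub>v unit_vec n m"
        using Suc.prems by (intro eq_vecI) (auto simp: head_def unit_vec_def less_Suc_eq)
      then have "nv (head (Suc m)) \<le> nv (head m) + nv (v $ m \<cdot>\<^sub>v unit_vec n m)"
        by (auto simp: head_def intro: is_vec_normD(4)[OF nv])
      also have "nv (v $ m \<cdot>\<^sub>v unit_vec n m) = cmod (v $ m) * nv (unit_vec n m)"
        by (simp add: is_vec_normD(3)[OF nv])
      finally show ?case using Suc by simp
    qed
    moreover have "head n = v" using v by (intro eq_vecI) (auto simp: head_def)
    ultimately have "nv v \<le> (\<Sum>i<n. cmod (v $ i) * nv (unit_vec n i))" by force
    also have "\<dots> \<le> (\<Sum>i<n. norm1 v * nv (unit_vec n i))"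
      using v by (intro sum_mono mult_right_mono norm_index_le_norm1 is_vec_normD(1)[OF nv]) auto
    finally show ?thesis by (simp add: s_def sum_distrib_left mult.commute)
  qed
  then show ?thesis
    using that[of "s + 1"] \<open>0 \<le> s\<close> norm1_nonneg
    by (smt (verit, best) mult_right_mono)
qed

lemma bounded_coords_convergent_subseq:
  fixes x :: "nat \<Rightarrow> nat \<Rightarrow> complex"
  assumes "\<And>j i. cmod (x j i) \<le> 1"
  shows "\<exists>r y. strict_mono r \<and> (\<forall>i<m. (\<lambda>j. x (r j) i) \<longlonglongrightarrow> y i)"
proof (induction m)
  case 0
  show ?case by (intro exI[of _ id]) (auto simp: strict_mono_def)
next
  case (Suc m)
  then obtain r y where r: "strict_mono r" and y: "\<forall>i<m. (\<lambda>j. x (r j) i) \<longlonglongrightarrow> y i" by blast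
  have "seq_compact (cball (0::complex) 1)" by (rule compact_imp_seq_compact[OF compact_cball])
  moreover have "\<forall>j. x (r j) m \<in> cball 0 1" using assms by auto
  ultimately obtain l r' where r': "strict_mono r'" and l: "((\<lambda>j. x (r j) m) \<circ> r') \<longlonglongrightarrow> l"
    unfolding seq_compact_def by metis
  have "\<forall>i<Suc m. (\<lambda>j. x ((r \<circ> r') j) i) \<longlonglongrightarrow> (y(m := l)) i"
  proof (intro allI impI)
    fix i assume "i < Suc m"
    then show "(\<lambda>j. x ((r \<circ> r') j) i) \<longlonglongrightarrow> (y(m := l)) i"
      using l y LIMSEQ_subseq_LIMSEQ[OF _ r', of "\<lambda>j. x (r j) i"]
      by (cases "i = m") (auto simp: o_def)
  qed
  with strict_mono_o[OF r r'] show ?case by blast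
qed

lemma norm1_sphere_convergent_subseq:
  fixes W :: "nat \<Rightarrow> complex vec"
  assumes W: "\<And>j. W j \<in> carrier_vec n" and norm_W: "\<And>j. norm1 (W j) = 1"
  obtains r w where "strict_mono r" "w \<in> carrier_vec n" "norm1 w = 1"
    "(\<lambda>j. norm1 (w - W (r j))) \<longlonglongrightarrow> 0"
proof -
  define x where "x j i = (if i < n then W j $ i else 0)" for j i
  have "cmod (x j i) \<le> 1" for j i
    using norm_index_le_norm1[of i "W j"] W[of j] norm_W[of j] by (auto simp: x_def)
  then obtain r y where r: "strict_mono r" and y: "\<forall>i<n. (\<lambda>j. x (r j) i) \<longlonglongrightarrow> y i"
    using bounded_coords_convergent_subseq[of x n] by blast
  define w where "w = vec n y"
  have "(\<lambda>j. norm1 (w - W (r j))) = (\<lambda>j. \<Sum>i<n. cmod (y i - x (r j) i))"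
    using W by (auto simp: norm1_def w_def x_def intro!: ext sum.cong)
  moreover have "(\<lambda>j. \<Sum>i<n. cmod (y i - x (r j) i)) \<longlonglongrightarrow> (\<Sum>i<n. cmod (y i - y i))"
    using y by (intro tendsto_sum tendsto_norm tendsto_diff tendsto_const) auto
  ultimately have lim: "(\<lambda>j. norm1 (w - W (r j))) \<longlonglongrightarrow> 0" by simp
  have "(\<lambda>j. norm1 (W (r j))) = (\<lambda>j. \<Sum>i<n. cmod (x (r j) i))"
    using W by (auto simp: norm1_def x_def intro!: ext sum.cong)
  moreover have "(\<lambda>j. \<Sum>i<n. cmod (x (r j) i)) \<longlonglongrightarrow> (\<Sum>i<n. cmod (y i))"
    using y by (intro tendsto_sum tendsto_norm) auto
  ultimately have "(\<lambda>j. 1::real) \<longlonglongrightarrow> (\<Sum>i<n. cmod (y i))" using norm_W by simp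
  then have "norm1 w = 1" using LIMSEQ_unique[OF tendsto_const] by (fastforce simp: norm1_def w_def)
  with r lim show ?thesis by (intro that[of r w]) (simp_all add: w_def)
qed

lemma norm1_le_vec_norm:
  assumes nv: "is_vec_norm n nv"
  obtains k where "0 < k" "\<And>v. v \<in> carrier_vec n \<Longrightarrow> k * norm1 v \<le> nv v"
proof (rule ccontr)
  assume "\<not> thesis"
  then have "\<exists>v \<in> carrier_vec n. nv v < inverse (real (Suc j)) * norm1 v" for j
    using that[of "inverse (real (Suc j))"] by force
  then obtain V where V: "\<And>j. V j \<in> carrier_vec n"
    and V_small: "\<And>j. nv (V j) < inverse (real (Suc j)) * norm1 (V j)"
    by metis
  have V_pos: "0 < norm1 (V j)" for j
  proof -
    have "0 < inverse (real (Suc j)) * norm1 (V j)"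
      using V_small[of j] is_vec_normD(1)[OF nv V, of j] by linarith
    then show ?thesis by (simp add: zero_less_mult_iff)
  qed
  define W where "W j = complex_of_real (1 / norm1 (V j)) \<cdot>\<^sub>v V j" for j
  have W: "W j \<in> carrier_vec n" "norm1 (W j) = 1" for j
    using V V_pos[of j] by (auto simp: W_def norm1_smult norm_divide)
  have W_small: "nv (W j) < inverse (real (Suc j))" for j
  proof -
    have "nv (W j) = nv (V j) / norm1 (V j)"
      using is_vec_normD(3)[OF nv V] V_pos[of j] by (simp add: W_def norm_divide)
    then show ?thesis
      using V_small[of j] V_pos[of j] by (simp add: divide_less_eq mult.commute)
  qed
  obtain r w where r: "strict_mono r" and w: "w \<in> carrier_vec n" "norm1 w = 1"
    and lim: "(\<lambda>j. norm1 (w - W (r j))) \<longlonglongrightarrow> 0"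
    using norm1_sphere_convergent_subseq[of W n] W by blast
  obtain a where a: "0 < a" "\<And>v. v \<in> carrier_vec n \<Longrightarrow> nv v \<le> a * norm1 v"
    using vec_norm_le_norm1[OF nv] by blast
  have "nv w \<le> a * norm1 (w - W (r j)) + inverse (real (Suc j))" for j
  proof -
    have "w = (w - W (r j)) + W (r j)"
      using w W[of "r j"] by (intro eq_vecI) auto
    then have "nv w \<le> nv (w - W (r j)) + nv (W (r j))"
      using is_vec_normD(4)[OF nv, of "w - W (r j)" "W (r j)"] w W[of "r j"] by simp
    moreover have "inverse (real (Suc (r j))) \<le> inverse (real (Suc j))"
      by (rule le_imp_inverse_le) (use seq_suble[OF r, of j] in auto)
    then have "nv (W (r j)) \<le> inverse (real (Suc j))"
      using W_small[of "r j"] by linarith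
    moreover have "nv (w - W (r j)) \<le> a * norm1 (w - W (r j))"
      using a(2) w W[of "r j"] by simp
    ultimately show ?thesis by linarith
  qed
  moreover have "(\<lambda>j. a * norm1 (w - W (r j)) + inverse (real (Suc j))) \<longlonglongrightarrow> a * 0 + 0"
    by (intro tendsto_add tendsto_mult tendsto_const lim LIMSEQ_inverse_real_of_nat)
  ultimately have "nv w \<le> 0"
    by (intro tendsto_le[OF trivial_limit_sequentially _ tendsto_const])
      (auto intro: always_eventually)
  moreover have "w \<noteq> 0\<^sub>v n" using w by auto
  ultimately show False using is_vec_norm_pos[OF nv w(1)] by simp
qed

lemma mult_mat_vec_le_induced_norm:
  assumes nv: "is_vec_norm n nv" and B: "B \<in> carrier_mat n n" and v: "v \<in> carrier_vec n"
  shows "nv (B *\<^sub>v v) \<le> induced_norm nv n B * nv v"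
proof (cases "v = 0\<^sub>v n")
  case True
  moreover have "B *\<^sub>v 0\<^sub>v n = 0\<^sub>v n" using B by auto
  ultimately show ?thesis using is_vec_normD(2)[OF nv, of "0\<^sub>v n"] by simp
next
  case False
  obtain a where a: "0 < a" "\<And>v. v \<in> carrier_vec n \<Longrightarrow> nv v \<le> a * norm1 v"
    using vec_norm_le_norm1[OF nv] by blast
  obtain k where k: "0 < k" "\<And>v. v \<in> carrier_vec n \<Longrightarrow> k * norm1 v \<le> nv v"
    using norm1_le_vec_norm[OF nv] by blast
  have "nv (B *\<^sub>v w) / nv w \<le> a * entrywise_norm1 B / k"
    if w: "w \<in> carrier_vec n" "w \<noteq> 0\<^sub>v n" for w
  proof -
    have "nv (B *\<^sub>v w) \<le> a * norm1 (B *\<^sub>v w)" using a(2) B w by simp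
    also have "\<dots> \<le> a * (entrywise_norm1 B * norm1 w)"
      using norm1_mult_mat_vec_le[OF B w(1)] a(1) by simp
    finally have "nv (B *\<^sub>v w) / nv w \<le> (a * entrywise_norm1 B * norm1 w) / (k * norm1 w)"
      using k(2)[OF w(1)] k(1) norm1_pos[of w] w is_vec_normD(1)[OF nv, of "B *\<^sub>v w"] B
      by (intro frac_le) (auto simp: mult.assoc)
    also have "\<dots> = a * entrywise_norm1 B / k"
      using norm1_pos[of w] w by auto
    finally show ?thesis .
  qed
  then have "bdd_above {nv (B *\<^sub>v w) / nv w | w. w \<in> carrier_vec n \<and> w \<noteq> 0\<^sub>v n}"
    by (intro bdd_aboveI) blast
  then have "nv (B *\<^sub>v v) / nv v \<le> induced_norm nv n B"
    unfolding induced_norm_def using v False by (intro cSup_upper) auto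
  then show ?thesis using is_vec_norm_pos[OF nv v False] by (simp add: divide_le_eq)
qed

lemma induced_norm_le:
  assumes nv: "is_vec_norm n nv" and "0 < n"
    and bound: "\<And>v. v \<in> carrier_vec n \<Longrightarrow> v \<noteq> 0\<^sub>v n \<Longrightarrow> nv (T *\<^sub>v v) \<le> \<beta> * nv v"
  shows "induced_norm nv n T \<le> \<beta>"
  unfolding induced_norm_def
proof (rule cSup_least)
  have "unit_vec n 0 \<in> carrier_vec n" "unit_vec n 0 \<noteq> (0\<^sub>v n :: complex vec)"
    using \<open>0 < n\<close> by (auto simp: unit_vec_def vec_eq_iff)
  then show "{nv (T *\<^sub>v v) / nv v | v. v \<in> carrier_vec n \<and> v \<noteq> 0\<^sub>v n} \<noteq> {}" by blast
next
  fix x assume "x \<in> {nv (T *\<^sub>v v) / nv v | v. v \<in> carrier_vec n \<and> v \<noteq> 0\<^sub>v n}"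
  then obtain v where v: "v \<in> carrier_vec n" "v \<noteq> 0\<^sub>v n" and x: "x = nv (T *\<^sub>v v) / nv v" by blast
  then show "x \<le> \<beta>" using bound[OF v] is_vec_norm_pos[OF nv v] by (simp add: divide_le_eq)
qed

lemma norm1_coercive_shifted:
  fixes M B R :: "complex mat"
  assumes M: "M \<in> carrier_mat n n" and B: "B \<in> carrier_mat n n" and R: "R \<in> carrier_mat n n"
    and BM: "B * M = 1\<^sub>m n" and u: "u \<in> carrier_vec n"
    and \<mu>: "2 * (entrywise_norm1 B + 1) * (1 + entrywise_norm1 R) \<le> \<mu>"
  shows "\<mu> / (2 * (entrywise_norm1 B + 1)) * norm1 u
           \<le> norm1 ((1\<^sub>m n - complex_of_real \<mu> \<cdot>\<^sub>m M - R) *\<^sub>v u)"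
proof -
  define b where "b = entrywise_norm1 B + 1"
  define r where "r = entrywise_norm1 R"
  define X where "X = 1\<^sub>m n - complex_of_real \<mu> \<cdot>\<^sub>m M - R"
  have "0 < b" "0 \<le> r"
    using entrywise_norm1_nonneg[of B] entrywise_norm1_nonneg[of R] by (simp_all add: b_def r_def)
  then have "0 < \<mu>" using \<mu> by (smt (verit) b_def r_def mult_pos_pos)
  have "norm1 u = norm1 (B *\<^sub>v (M *\<^sub>v u))"
    using assoc_mult_mat_vec[OF B M u] BM u by simp
  also have "\<dots> \<le> b * norm1 (M *\<^sub>v u)"
    using norm1_mult_mat_vec_le[OF B, of "M *\<^sub>v u"] M u norm1_nonneg[of "M *\<^sub>v u"]
    by (simp add: b_def algebra_simps)
  finally have u_le: "norm1 u \<le> b * norm1 (M *\<^sub>v u)" .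
  have "(X *\<^sub>v u) $ i = u $ i - complex_of_real \<mu> * (M *\<^sub>v u) $ i - (R *\<^sub>v u) $ i" if "i < n" for i
  proof -
    have "X *\<^sub>v u = (1\<^sub>m n - complex_of_real \<mu> \<cdot>\<^sub>m M) *\<^sub>v u - R *\<^sub>v u"
      unfolding X_def using M R u by (intro minus_mult_distrib_mat_vec) auto
    also have "(1\<^sub>m n - complex_of_real \<mu> \<cdot>\<^sub>m M) *\<^sub>v u = 1\<^sub>m n *\<^sub>v u - (complex_of_real \<mu> \<cdot>\<^sub>m M) *\<^sub>v u"
      using M u by (intro minus_mult_distrib_mat_vec) auto
    finally have "X *\<^sub>v u = 1\<^sub>m n *\<^sub>v u - (complex_of_real \<mu> \<cdot>\<^sub>m M) *\<^sub>v u - R *\<^sub>v u" .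
    then show ?thesis using M R u that by (simp add: scalar_prod_def sum_distrib_left mult.assoc)
  qed
  then have "norm1 (complex_of_real \<mu> \<cdot>\<^sub>v (M *\<^sub>v u)) \<le> norm1 u + norm1 (R *\<^sub>v u) + norm1 (X *\<^sub>v u)"
    using M R u by (intro norm1_diff3_le[where n = n]) (auto simp: X_def)
  then have "\<mu> * norm1 (M *\<^sub>v u) \<le> (1 + r) * norm1 u + norm1 (X *\<^sub>v u)"
    using norm1_mult_mat_vec_le[OF R u] \<open>0 < \<mu>\<close> by (simp add: norm1_smult r_def algebra_simps)
  moreover have "(1 + r) * norm1 u \<le> \<mu> / (2 * b) * norm1 u"
    using \<mu> \<open>0 < b\<close> norm1_nonneg[of u]
    by (intro mult_right_mono) (simp_all add: b_def r_def field_simps)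
  moreover have "2 * (\<mu> / (2 * b) * norm1 u) \<le> \<mu> * norm1 (M *\<^sub>v u)"
    using u_le \<open>0 < b\<close> \<open>0 < \<mu>\<close> by (simp add: field_simps)
  ultimately show ?thesis unfolding X_def[symmetric] b_def[symmetric] by linarith
qed

lemma minv_norm1_le_if_coercive:
  fixes X :: "complex mat"
  assumes X: "X \<in> carrier_mat n n" and "0 < \<kappa>"
    and coercive: "\<And>u. u \<in> carrier_vec n \<Longrightarrow> \<kappa> * norm1 u \<le> norm1 (X *\<^sub>v u)"
  shows "minv X \<in> carrier_mat n n" "minv X * X = 1\<^sub>m n"
    and "\<And>w. w \<in> carrier_vec n \<Longrightarrow> norm1 (minv X *\<^sub>v w) \<le> norm1 w / \<kappa>"
proof -
  have "u = 0\<^sub>v n" if "u \<in> carrier_vec n" "X *\<^sub>v u = 0\<^sub>v n" for u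
    using coercive[OF that(1)] that norm1_pos[of u] \<open>0 < \<kappa>\<close>
    by (metis carrier_vecD mult_pos_pos norm1_zero_vec not_le)
  then have "det X \<noteq> 0" using det_0_iff_vec_prod_zero_field[OF X] by blast
  note inv = minv_if_det_nonzero[OF X this]
  show "minv X \<in> carrier_mat n n" "minv X * X = 1\<^sub>m n" by (fact inv)+
  fix w :: "complex vec" assume w: "w \<in> carrier_vec n"
  have "X *\<^sub>v (minv X *\<^sub>v w) = w"
    using assoc_mult_mat_vec[OF X inv(1) w] inv(2) w by simp
  then show "norm1 (minv X *\<^sub>v w) \<le> norm1 w / \<kappa>"
    using coercive[of "minv X *\<^sub>v w"] inv(1) w \<open>0 < \<kappa>\<close> by (simp add: field_simps)
qed

definition inverse_decays :: "nat \<Rightarrow> (real \<Rightarrow> complex mat) \<Rightarrow> bool" where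
  "inverse_decays n X \<longleftrightarrow> (\<exists>\<mu>0 K. 0 < \<mu>0 \<and> 0 \<le> K \<and> (\<forall>\<mu>\<ge>\<mu>0.
     minv (X \<mu>) \<in> carrier_mat n n \<and> minv (X \<mu>) * X \<mu> = 1\<^sub>m n \<and>
     (\<forall>w\<in>carrier_vec n. norm1 (minv (X \<mu>) *\<^sub>v w) \<le> K / \<mu> * norm1 w)))"

lemma inverse_decays_shifted:
  fixes M B R :: "complex mat"
  assumes M: "M \<in> carrier_mat n n" and B: "B \<in> carrier_mat n n" and R: "R \<in> carrier_mat n n"
    and BM: "B * M = 1\<^sub>m n"
  shows "inverse_decays n (\<lambda>\<mu>. 1\<^sub>m n - complex_of_real \<mu> \<cdot>\<^sub>m M - R)"
  unfolding inverse_decays_def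
proof (intro exI conjI allI impI)
  define b where "b = entrywise_norm1 B + 1"
  have "0 < b" by (simp add: b_def add_nonneg_pos entrywise_norm1_nonneg)
  show "0 < 2 * b * (1 + entrywise_norm1 R)" "0 \<le> 2 * b"
    using \<open>0 < b\<close> entrywise_norm1_nonneg[of R] by (simp_all add: add_pos_nonneg)
  fix \<mu> :: real assume \<mu>: "2 * b * (1 + entrywise_norm1 R) \<le> \<mu>"
  then have "0 < \<mu>"
    using \<open>0 < b\<close> entrywise_norm1_nonneg[of R] by (smt (verit) mult_pos_pos)
  let ?X = "1\<^sub>m n - complex_of_real \<mu> \<cdot>\<^sub>m M - R"
  have X: "?X \<in> carrier_mat n n" using M R by auto
  note inv = minv_norm1_le_if_coercive[OF X _ norm1_coercive_shifted[OF M B R BM _ \<mu>[unfolded b_def]]]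
  show "minv ?X \<in> carrier_mat n n" "minv ?X * ?X = 1\<^sub>m n"
    using inv \<open>0 < b\<close> \<open>0 < \<mu>\<close> by (simp_all add: b_def)
  show "\<forall>w\<in>carrier_vec n. norm1 (minv ?X *\<^sub>v w) \<le> 2 * b / \<mu> * norm1 w"
    using inv(3) \<open>0 < b\<close> \<open>0 < \<mu>\<close> by (simp add: b_def field_simps)
qed

lemma poly_antiderivative:
  fixes p :: "'a::field_char_0 poly"
  obtains P where "pderiv P = p" "degree P \<le> Suc (degree p)"
proof
  define P where "P = Poly (0 # map (\<lambda>i. coeff p i / of_nat (Suc i)) [0..<Suc (degree p)])"
  have coeff_P: "coeff P (Suc n) = coeff p n / of_nat (Suc n)" for n
    by (cases "n \<le> degree p")
      (simp_all add: P_def nth_default_def nth_append coeff_eq_0 del: upt_Suc)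
  show "pderiv P = p" by (rule poly_eqI) (simp add: coeff_pderiv coeff_P del: of_nat_Suc)
  show "degree P \<le> Suc (degree p)"
  proof (rule degree_le, intro allI impI)
    fix i assume "Suc (degree p) < i"
    then show "coeff P i = 0" by (cases i) (simp_all add: coeff_P coeff_eq_0)
  qed
qed

lemma poly_pderiv_has_integral:
  fixes P :: "real poly"
  assumes "a \<le> b"
  shows "(poly (pderiv P) has_integral (poly P b - poly P a)) {a..b}"
proof (rule fundamental_theorem_of_calculus[OF assms])
  fix x assume "x \<in> {a..b}"
  have "(poly P has_real_derivative poly (pderiv P) x) (at x within {a..b})"
    by (rule DERIV_subset[OF poly_DERIV]) auto
  then show "(poly P has_vector_derivative poly (pderiv P) x) (at x within {a..b})"
    by (simp add: has_real_derivative_iff_has_vector_derivative)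
qed

text \<open>The antiderivative vanishing at 0 has the \<open>m + 1\<close> roots \<open>0, t 0, \<dots>, t (m - 1)\<close> but
  degree at most \<open>m\<close>.\<close>
lemma poly_eq_0_if_integrals_vanish:
  fixes p :: "real poly"
  assumes "degree p < m" and inj: "inj_on t {..<m}" and pos: "\<And>i. i < m \<Longrightarrow> 0 < t i"
    and vanish: "\<And>i. i < m \<Longrightarrow> integral {0..t i} (poly p) = 0"
  shows "p = 0"
proof -
  obtain P where P: "pderiv P = p" "degree P \<le> Suc (degree p)" by (rule poly_antiderivative)
  define R where "R = P - [:poly P 0:]"
  have "poly R (t i) = 0" if "i < m" for i
    using vanish[OF that] integral_unique[OF poly_pderiv_has_integral[of 0 "t i" P]] pos[OF that] P(1)
    by (simp add: R_def)
  moreover have "poly R 0 = 0" by (simp add: R_def)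
  ultimately have roots: "insert 0 (t ` {..<m}) \<subseteq> {x. poly R x = 0}" by auto
  have "0 \<notin> t ` {..<m}" using pos by force
  then have card_roots: "card (insert 0 (t ` {..<m})) = Suc m"
    using inj by (simp add: card_image)
  have "R = 0"
  proof (rule ccontr)
    assume "R \<noteq> 0"
    have "degree R \<le> m"
      using P(2) \<open>degree p < m\<close> by (simp add: R_def degree_diff_le)
    moreover have "Suc m \<le> degree R"
      using card_roots card_mono[OF poly_roots_finite[OF \<open>R \<noteq> 0\<close>] roots]
        card_poly_roots_bound[OF \<open>R \<noteq> 0\<close>] by linarith
    ultimately show False by simp
  qed
  then have "pderiv R = 0" by simp
  then show "p = 0" using P(1) by (simp add: R_def pderiv_diff pderiv_pCons)
qed

definition lagrange_basis_poly :: "nat \<Rightarrow> (nat \<Rightarrow> real) \<Rightarrow> nat \<Rightarrow> real poly" where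
  "lagrange_basis_poly M \<tau> j = (\<Prod>i\<in>{..<M} - {j}. [:- \<tau> i / (\<tau> j - \<tau> i), 1 / (\<tau> j - \<tau> i):])"

lemma poly_lagrange_basis_poly: "poly (lagrange_basis_poly M \<tau> j) = lagrange_basis M \<tau> j"
  unfolding lagrange_basis_poly_def lagrange_basis_def poly_prod
  by (intro ext prod.cong refl) (simp add: diff_divide_distrib)

lemma degree_lagrange_basis_poly:
  assumes "j < M" shows "degree (lagrange_basis_poly M \<tau> j) \<le> M - 1"
proof -
  have "degree (lagrange_basis_poly M \<tau> j) \<le> (\<Sum>i\<in>{..<M} - {j}. 1)"
    unfolding lagrange_basis_poly_def
    by (intro order.trans[OF degree_prod_sum_le] sum_mono) (simp_all add: degree_pCons_le)
  then show ?thesis using assms by simp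
qed

lemma lagrange_basis_node:
  assumes mono: "\<And>i j. i < j \<Longrightarrow> j < M \<Longrightarrow> \<tau> i < \<tau> j" and "j < M" "k < M"
  shows "lagrange_basis M \<tau> j (\<tau> k) = (if k = j then 1 else 0)"
proof (cases "k = j")
  case True
  have "\<tau> j \<noteq> \<tau> i" if "i < M" "i \<noteq> j" for i
    using that \<open>j < M\<close> mono[of i j] mono[of j i] by (cases "i < j") auto
  then show ?thesis using True by (simp add: lagrange_basis_def)
next
  case False
  then show ?thesis using \<open>k < M\<close> by (auto simp: lagrange_basis_def intro: prod_zero)
qed

text \<open>\<open>Q c\<close> lists the integrals from 0 to the nodes of the interpolant of \<open>c\<close>; so \<open>Q c = 0\<close>
  forces the interpolant, and hence \<open>c\<close>, to vanish.\<close>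
lemma det_collocQ_nonzero:
  assumes mono: "\<And>i j. i < j \<Longrightarrow> j < M \<Longrightarrow> \<tau> i < \<tau> j" and "0 < \<tau> 0" and "0 < M"
  shows "det (collocQ M \<tau>) \<noteq> 0"
proof -
  have pos: "0 < \<tau> m" if "m < M" for m
    using \<open>0 < \<tau> 0\<close> mono[of 0 m] that by (cases m) auto
  have "c = 0\<^sub>v M" if c: "c \<in> carrier_vec M" and Qc: "collocQ M \<tau> *\<^sub>v c = 0\<^sub>v M" for c :: "real vec"
  proof -
    define p where "p = (\<Sum>j<M. Polynomial.smult (c $ j) (lagrange_basis_poly M \<tau> j))"
    have poly_p: "poly p = (\<lambda>s. \<Sum>j<M. c $ j * lagrange_basis M \<tau> j s)"
      by (simp add: p_def poly_sum poly_lagrange_basis_poly[symmetric] fun_eq_iff)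
    have "degree p \<le> M - 1"
      unfolding p_def
      by (intro degree_sum_le order.trans[OF Polynomial.degree_smult_le] degree_lagrange_basis_poly) auto
    moreover have "integral {0..\<tau> m} (poly p) = 0" if "m < M" for m
    proof -
      have "lagrange_basis M \<tau> j integrable_on {0..\<tau> m}" for j
        unfolding poly_lagrange_basis_poly[symmetric]
        by (intro integrable_continuous_interval continuous_intros)
      then have "(poly p has_integral (\<Sum>j<M. c $ j * integral {0..\<tau> m} (lagrange_basis M \<tau> j)))
          {0..\<tau> m}"
        unfolding poly_p by (intro has_integral_sum has_integral_mult_right integrable_integral) auto
      then have "integral {0..\<tau> m} (poly p) = (\<Sum>j<M. c $ j * integral {0..\<tau> m} (lagrange_basis M \<tau> j))"
        by (rule integral_unique)
      also have "\<dots> = (collocQ M \<tau> *\<^sub>v c) $ m"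
        using c that by (simp add: collocQ_def scalar_prod_def lessThan_atLeast0 mult.commute)
      finally show ?thesis using Qc that by simp
    qed
    moreover have "inj_on \<tau> {..<M}"
      by (intro inj_onI) (metis lessThan_iff linorder_neqE_nat mono order_less_irrefl)
    ultimately have "p = 0"
      using \<open>0 < M\<close> pos by (intro poly_eq_0_if_integrals_vanish[where t = \<tau> and m = M]) auto
    have "poly p (\<tau> k) = c $ k" if "k < M" for k
    proof -
      have "poly p (\<tau> k) = (\<Sum>j<M. c $ j * (if k = j then 1 else 0))"
        unfolding poly_p using lagrange_basis_node[where \<tau> = \<tau>, OF mono _ that] by simp
      also have "\<dots> = c $ k" using that by (simp add: if_distrib[of "\<lambda>x. c $ _ * x"] cong: if_cong)
      finally show ?thesis .
    qed
    then show "c = 0\<^sub>v M" using \<open>p = 0\<close> c by (intro eq_vecI) auto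
  qed
  then show ?thesis
    using det_0_iff_vec_prod_zero_field[of "collocQ M \<tau>" M] by (auto simp: collocQ_def)
qed

lemma det_transpose_factor_nonzero:
  fixes Q F U :: "'a::comm_ring_1 mat"
  assumes "Q \<in> carrier_mat n n" "F \<in> carrier_mat n n" "U \<in> carrier_mat n n"
    and "det Q \<noteq> 0" "transpose_mat Q = F * U"
  shows "det (transpose_mat U) \<noteq> 0"
  using assms det_transpose[of Q n] det_transpose[of U n] det_mult[of F n U] by auto

lemma kron_collocation_left_inverse:
  fixes X :: "real mat" and A :: "complex mat"
  assumes X: "X \<in> carrier_mat m m" "det X \<noteq> 0" and A: "A \<in> carrier_mat n n" "det A \<noteq> 0"
  obtains B where "B \<in> carrier_mat (L * m * n) (L * m * n)"
    "B * kron (1\<^sub>m L) (kron (cmat X) A) = 1\<^sub>m (L * m * n)"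
proof -
  obtain BX where BX: "BX \<in> carrier_mat m m" "BX * X = 1\<^sub>m m"
    using left_inverse_if_det_nonzero[OF X] .
  obtain BA where BA: "BA \<in> carrier_mat n n" "BA * A = 1\<^sub>m n"
    using left_inverse_if_det_nonzero[OF A] .
  have cX: "cmat X \<in> carrier_mat m m" "cmat BX \<in> carrier_mat m m" "cmat BX * cmat X = 1\<^sub>m m"
    using cmat_mult[OF BX(1), of X] X BX by (auto intro: cmat_carrier_mat)
  have "kron (cmat BX) BA * kron (cmat X) A = 1\<^sub>m (m * n)"
    by (rule kron_left_inverse[OF cX A(1) BA])
  then have "kron (1\<^sub>m L) (kron (cmat BX) BA) * kron (1\<^sub>m L) (kron (cmat X) A) = 1\<^sub>m (L * (m * n))"
    using BX A BA X by (intro kron_left_inverse[where m = L and n = "m * n"]) (auto intro!: kron_carrier_mat)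
  moreover have "kron (1\<^sub>m L) (kron (cmat BX) BA) \<in> carrier_mat (L * (m * n)) (L * (m * n))"
    using cX BA by (intro kron_carrier_mat) auto
  ultimately show ?thesis using that by (simp add: mult.assoc)
qed

lemma Ptilde_eq_Cmat: "Ptilde L M N Q A = Cmat L M N Q A"
  by (simp add: fun_eq_iff Ptilde_def Cmat_def)

lemma inverse_decays_Cmat:
  assumes "Q \<in> carrier_mat M M" "det Q \<noteq> 0" "A \<in> carrier_mat N N" "det A \<noteq> 0"
  shows "inverse_decays (L * M * N) (Cmat L M N Q A)"
proof -
  obtain B where "B \<in> carrier_mat (L * M * N) (L * M * N)"
    "B * kron (1\<^sub>m L) (kron (cmat Q) A) = 1\<^sub>m (L * M * N)"
    using kron_collocation_left_inverse[OF assms] .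
  moreover have "kron (shiftE L) (Hmat M N) \<in> carrier_mat (L * M * N) (L * M * N)"
    by (auto simp: shiftE_def Hmat_def lastcolN_def)
  moreover have "kron (1\<^sub>m L) (kron (cmat Q) A) \<in> carrier_mat (L * M * N) (L * M * N)"
    using assms by (auto simp: mult.assoc)
  ultimately show ?thesis
    using inverse_decays_shifted by (simp add: Cmat_def[abs_def])
qed

lemma inverse_decays_P2hat:
  assumes "QD \<in> carrier_mat M M" "det QD \<noteq> 0" "A \<in> carrier_mat N N" "det A \<noteq> 0"
  shows "inverse_decays (L * M * N) (P2hat L M N QD A)"
proof -
  have QD2: "2 \<cdot>\<^sub>m QD \<in> carrier_mat M M" "det (2 \<cdot>\<^sub>m QD) \<noteq> 0" using assms by auto
  obtain B where "B \<in> carrier_mat (L * M * N) (L * M * N)"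
    "B * kron (1\<^sub>m L) (kron (cmat (2 \<cdot>\<^sub>m QD)) A) = 1\<^sub>m (L * M * N)"
    using kron_collocation_left_inverse[OF QD2 assms(3,4)] .
  moreover have "kron (1\<^sub>m L) (kron (cmat (2 \<cdot>\<^sub>m QD)) A) \<in> carrier_mat (L * M * N) (L * M * N)"
    using assms by (auto simp: mult.assoc)
  moreover have "P2hat L M N QD A = (\<lambda>\<mu>. 1\<^sub>m (L * M * N)
      - complex_of_real \<mu> \<cdot>\<^sub>m kron (1\<^sub>m L) (kron (cmat (2 \<cdot>\<^sub>m QD)) A) - 0\<^sub>m (L * M * N) (L * M * N))"
    using assms by (auto simp: fun_eq_iff P2hat_def mult.assoc intro!: eq_matI)
  ultimately show ?thesis
    using inverse_decays_shifted[OF _ _ zero_carrier_mat] by simp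
qed

lemma Cmat_carrier_mat: "Cmat L M N Q A \<mu> \<in> carrier_mat (L * M * N) (L * M * N)"
  unfolding Cmat_def Hmat_def mult.assoc
  by (intro minus_carrier_mat kron_carrier_mat) (auto simp: shiftE_def lastcolN_def)

lemma coarse_corrected_norm_le:
  fixes C Ci T TCF TFC Pi :: "complex mat"
  assumes nv: "is_vec_norm n nv" and "0 < n"
    and nv_le: "\<And>v. v \<in> carrier_vec n \<Longrightarrow> nv v \<le> a * norm1 v" and "0 < a"
    and nv_ge: "\<And>v. v \<in> carrier_vec n \<Longrightarrow> k * norm1 v \<le> nv v" and "0 < k"
    and C: "C \<in> carrier_mat n n" and Ci: "Ci \<in> carrier_mat n n" "Ci * C = 1\<^sub>m n"
    and T: "T \<in> carrier_mat n n"
    and TCF: "TCF \<in> carrier_mat n nt" and TFC: "TFC \<in> carrier_mat nt n" and Pi: "Pi \<in> carrier_mat nt nt"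
    and Ci_le: "\<And>w. w \<in> carrier_vec n \<Longrightarrow> norm1 (Ci *\<^sub>v w) \<le> \<kappa>1 * norm1 w" and "0 \<le> \<kappa>1"
    and Pi_le: "\<And>w. w \<in> carrier_vec nt \<Longrightarrow> norm1 (Pi *\<^sub>v w) \<le> \<kappa>2 * norm1 w" and "0 \<le> \<kappa>2"
  shows "induced_norm nv n ((1\<^sub>m n - TCF * Pi * TFC * C) * T)
           \<le> a / k * (\<kappa>1 + entrywise_norm1 TCF * \<kappa>2 * entrywise_norm1 TFC) * induced_norm nv n (C * T)"
proof (rule induced_norm_le[OF nv \<open>0 < n\<close>])
  fix v :: "complex vec" assume v: "v \<in> carrier_vec n"
  define u where "u = (C * T) *\<^sub>v v"
  define G where "G = \<kappa>1 + entrywise_norm1 TCF * \<kappa>2 * entrywise_norm1 TFC"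
  define x where "x = Ci *\<^sub>v u - TCF *\<^sub>v (Pi *\<^sub>v (TFC *\<^sub>v u))"
  have u: "u \<in> carrier_vec n" using C T v by (simp add: u_def)
  have x: "x \<in> carrier_vec n" using Ci TCF Pi TFC u by (simp add: x_def)
  have "0 \<le> G" using \<open>0 \<le> \<kappa>1\<close> \<open>0 \<le> \<kappa>2\<close> by (simp add: G_def entrywise_norm1_nonneg)
  have Y: "TCF * Pi * TFC \<in> carrier_mat n n" using TCF Pi TFC by auto
  have Tv: "T *\<^sub>v v \<in> carrier_vec n" using T v by simp
  have u_eq: "u = C *\<^sub>v (T *\<^sub>v v)" unfolding u_def using C T v by (rule assoc_mult_mat_vec)
  then have "Ci *\<^sub>v u = T *\<^sub>v v"
    using Ci C Tv by (simp add: assoc_mult_mat_vec[symmetric])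
  have "((1\<^sub>m n - TCF * Pi * TFC * C) * T) *\<^sub>v v = (1\<^sub>m n - TCF * Pi * TFC * C) *\<^sub>v (T *\<^sub>v v)"
    using Y C T v by (intro assoc_mult_mat_vec) auto
  also have "\<dots> = T *\<^sub>v v - (TCF * Pi * TFC * C) *\<^sub>v (T *\<^sub>v v)"
    using Y C Tv by (subst minus_mult_distrib_mat_vec) auto
  also have "(TCF * Pi * TFC * C) *\<^sub>v (T *\<^sub>v v) = TCF *\<^sub>v (Pi *\<^sub>v (TFC *\<^sub>v u))"
    using assoc_mult_mat_vec[OF Y C Tv] assoc_mult_mat_vec[OF mult_carrier_mat[OF TCF Pi] TFC u]
      assoc_mult_mat_vec[OF TCF Pi, of "TFC *\<^sub>v u"] TFC u by (simp add: u_eq)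
  finally have Tv: "((1\<^sub>m n - TCF * Pi * TFC * C) * T) *\<^sub>v v = x"
    using \<open>Ci *\<^sub>v u = T *\<^sub>v v\<close> by (simp add: x_def)
  have "norm1 (Pi *\<^sub>v (TFC *\<^sub>v u)) \<le> \<kappa>2 * (entrywise_norm1 TFC * norm1 u)"
    using Pi_le[of "TFC *\<^sub>v u"] norm1_mult_mat_vec_le[OF TFC u] TFC u \<open>0 \<le> \<kappa>2\<close>
    by (meson mult_left_mono mult_mat_vec_carrier order_trans)
  then have "norm1 (TCF *\<^sub>v (Pi *\<^sub>v (TFC *\<^sub>v u)))
      \<le> entrywise_norm1 TCF * (\<kappa>2 * (entrywise_norm1 TFC * norm1 u))"
    using norm1_mult_mat_vec_le[OF TCF, of "Pi *\<^sub>v (TFC *\<^sub>v u)"] TFC Pi u entrywise_norm1_nonneg[of TCF]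
    by (meson mult_left_mono mult_mat_vec_carrier order_trans)
  then have "norm1 x \<le> G * norm1 u"
    using norm1_minus_le[of "Ci *\<^sub>v u" "TCF *\<^sub>v (Pi *\<^sub>v (TFC *\<^sub>v u))"] Ci_le[OF u] Ci TCF
    by (simp add: x_def G_def algebra_simps)
  then have "nv x \<le> a * (G * norm1 u)"
    using nv_le[OF x] \<open>0 < a\<close> by (meson mult_left_mono order_trans less_imp_le)
  also have "\<dots> \<le> a / k * G * nv u"
    using nv_ge[OF u] \<open>0 < a\<close> \<open>0 < k\<close> \<open>0 \<le> G\<close>
    by (simp add: field_simps mult_left_mono)
  also have "\<dots> \<le> a / k * G * (induced_norm nv n (C * T) * nv v)"
    unfolding u_def using C T v \<open>0 < a\<close> \<open>0 < k\<close> \<open>0 \<le> G\<close>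
    by (intro mult_left_mono mult_mat_vec_le_induced_norm[OF nv]) auto
  finally show "nv (((1\<^sub>m n - TCF * Pi * TFC * C) * T) *\<^sub>v v)
      \<le> a / k * (\<kappa>1 + entrywise_norm1 TCF * \<kappa>2 * entrywise_norm1 TFC) * induced_norm nv n (C * T) * nv v"
    by (simp add: Tv G_def mult.assoc)
qed

lemma Tpfasst_norm_decay:
  assumes nv: "is_vec_norm (L * M * N) nv" and "0 < L * M * N"
    and C: "inverse_decays (L * M * N) (Cmat L M N Q A)"
    and P: "inverse_decays (L * Mt * Nt) (Ptilde L Mt Nt QDt At)"
    and P2: "inverse_decays (L * M * N) (P2hat L M N QD A)"
    and TFC: "TFC \<in> carrier_mat (L * Mt * Nt) (L * M * N)"
    and TCF: "TCF \<in> carrier_mat (L * M * N) (L * Mt * Nt)"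
  obtains G \<mu>1 where "0 \<le> G" "0 < \<mu>1"
    "\<And>k \<mu>. \<mu>1 \<le> \<mu> \<Longrightarrow> induced_norm nv (L * M * N) (Tpfasst L M N Mt Nt Q QD QDt A At TCF TFC \<mu> k)
       \<le> G / \<mu> * induced_norm nv (L * M * N) (Cmat L M N Q A \<mu> * T2mat L M N Q QD A \<mu> ^\<^sub>m k)"
proof -
  let ?n = "L * M * N" and ?nt = "L * Mt * Nt"
  obtain \<mu>C KC where "0 < \<mu>C" "0 \<le> KC" and C_inv: "\<And>\<mu>. \<mu>C \<le> \<mu> \<Longrightarrow>
      minv (Cmat L M N Q A \<mu>) \<in> carrier_mat ?n ?n \<and> minv (Cmat L M N Q A \<mu>) * Cmat L M N Q A \<mu> = 1\<^sub>m ?n \<and>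
      (\<forall>w\<in>carrier_vec ?n. norm1 (minv (Cmat L M N Q A \<mu>) *\<^sub>v w) \<le> KC / \<mu> * norm1 w)"
    using C unfolding inverse_decays_def by blast
  obtain \<mu>P KP where "0 < \<mu>P" "0 \<le> KP" and P_inv: "\<And>\<mu>. \<mu>P \<le> \<mu> \<Longrightarrow>
      minv (Ptilde L Mt Nt QDt At \<mu>) \<in> carrier_mat ?nt ?nt \<and>
      (\<forall>w\<in>carrier_vec ?nt. norm1 (minv (Ptilde L Mt Nt QDt At \<mu>) *\<^sub>v w) \<le> KP / \<mu> * norm1 w)"
    using P unfolding inverse_decays_def by blast
  obtain \<mu>P2 where P2_inv: "\<And>\<mu>. \<mu>P2 \<le> \<mu> \<Longrightarrow> minv (P2hat L M N QD A \<mu>) \<in> carrier_mat ?n ?n"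
    using P2 unfolding inverse_decays_def by blast
  obtain a where "0 < a" and nv_le: "\<And>v. v \<in> carrier_vec ?n \<Longrightarrow> nv v \<le> a * norm1 v"
    using vec_norm_le_norm1[OF nv] by blast
  obtain k where "0 < k" and nv_ge: "\<And>v. v \<in> carrier_vec ?n \<Longrightarrow> k * norm1 v \<le> nv v"
    using norm1_le_vec_norm[OF nv] by blast
  define G where "G = a / k * (KC + entrywise_norm1 TCF * KP * entrywise_norm1 TFC)"
  show ?thesis
  proof (rule that[of G "max \<mu>C (max \<mu>P \<mu>P2)"])
    show "0 \<le> G" using \<open>0 < a\<close> \<open>0 < k\<close> \<open>0 \<le> KC\<close> \<open>0 \<le> KP\<close> by (simp add: G_def entrywise_norm1_nonneg)
    show "0 < max \<mu>C (max \<mu>P \<mu>P2)" using \<open>0 < \<mu>C\<close> by simp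
    fix j \<mu> assume "max \<mu>C (max \<mu>P \<mu>P2) \<le> \<mu>"
    then have \<mu>: "\<mu>C \<le> \<mu>" "\<mu>P \<le> \<mu>" "\<mu>P2 \<le> \<mu>" "0 < \<mu>" using \<open>0 < \<mu>C\<close> by auto
    have T2: "T2mat L M N Q QD A \<mu> ^\<^sub>m j \<in> carrier_mat ?n ?n"
      unfolding T2mat_def using P2_inv[OF \<mu>(3)] Cmat_carrier_mat
      by (intro pow_carrier_mat minus_carrier_mat mult_carrier_mat) auto
    have "induced_norm nv ?n (Tpfasst L M N Mt Nt Q QD QDt A At TCF TFC \<mu> j)
        \<le> a / k * (KC / \<mu> + entrywise_norm1 TCF * (KP / \<mu>) * entrywise_norm1 TFC)
          * induced_norm nv ?n (Cmat L M N Q A \<mu> * T2mat L M N Q QD A \<mu> ^\<^sub>m j)"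
      unfolding Tpfasst_def
    proof (rule coarse_corrected_norm_le[OF nv \<open>0 < ?n\<close> nv_le \<open>0 < a\<close> nv_ge \<open>0 < k\<close>
          Cmat_carrier_mat _ _ T2 TCF TFC])
      show "0 \<le> KC / \<mu>" "0 \<le> KP / \<mu>" using \<open>0 \<le> KC\<close> \<open>0 \<le> KP\<close> \<mu>(4) by simp_all
    qed (use C_inv[OF \<mu>(1)] P_inv[OF \<mu>(2)] in blast)+
    also have "\<dots> = G / \<mu> * induced_norm nv ?n (Cmat L M N Q A \<mu> * T2mat L M N Q QD A \<mu> ^\<^sub>m j)"
      using \<mu>(4) by (simp add: G_def field_simps)
    finally show "induced_norm nv ?n (Tpfasst L M N Mt Nt Q QD QDt A At TCF TFC \<mu> j)
        \<le> G / \<mu> * induced_norm nv ?n (Cmat L M N Q A \<mu> * T2mat L M N Q QD A \<mu> ^\<^sub>m j)" .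
  qed
qed

lemma uniform_bound_if_smoothing:
  fixes f g :: "real \<Rightarrow> nat \<Rightarrow> real"
  assumes "0 \<le> G" "0 < \<mu>1" and decay: "\<And>k \<mu>. \<mu>1 \<le> \<mu> \<Longrightarrow> f \<mu> k \<le> G / \<mu> * g \<mu> k"
    and "\<exists>c \<mu>0. \<forall>k::nat. \<forall>\<mu>::real. 1 \<le> k \<and> \<mu>0 \<le> \<mu> \<longrightarrow> g \<mu> k \<le> c * sqrt (8 / (real k * pi)) * \<mu>"
  shows "\<exists>c>0. \<exists>\<mu>s>0. \<forall>k::nat. \<forall>\<mu>::real. 1 \<le> k \<and> \<mu>s \<le> \<mu> \<longrightarrow> f \<mu> k \<le> c / sqrt (real k)"
proof -
  obtain c \<mu>0 where smooth: "\<And>k \<mu>. 1 \<le> k \<Longrightarrow> \<mu>0 \<le> \<mu> \<Longrightarrow> g \<mu> k \<le> c * sqrt (8 / (real k * pi)) * \<mu>"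
    using assms(4) by blast
  show ?thesis
  proof (rule exI[of _ "G * \<bar>c\<bar> * sqrt (8 / pi) + 1"], intro conjI exI[of _ "max \<mu>0 \<mu>1"] allI impI)
    fix k :: nat and \<mu> :: real assume "1 \<le> k \<and> max \<mu>0 \<mu>1 \<le> \<mu>"
    then have "1 \<le> k" "\<mu>0 \<le> \<mu>" "\<mu>1 \<le> \<mu>" "0 < \<mu>" using \<open>0 < \<mu>1\<close> by auto
    have "g \<mu> k \<le> \<bar>c\<bar> * sqrt (8 / (real k * pi)) * \<mu>"
      using smooth[OF \<open>1 \<le> k\<close> \<open>\<mu>0 \<le> \<mu>\<close>] \<open>0 < \<mu>\<close>
      by (elim order.trans) (intro mult_right_mono; simp)
    then have "f \<mu> k \<le> G / \<mu> * (\<bar>c\<bar> * sqrt (8 / (real k * pi)) * \<mu>)"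
      using \<open>0 \<le> G\<close> \<open>0 < \<mu>\<close> by (intro order.trans[OF decay[OF \<open>\<mu>1 \<le> \<mu>\<close>] mult_left_mono]) simp_all
    also have "\<dots> = G * \<bar>c\<bar> * sqrt (8 / pi) / sqrt (real k)"
      using \<open>0 < \<mu>\<close> by (simp add: real_sqrt_divide real_sqrt_mult mult_ac)
    also have "\<dots> \<le> (G * \<bar>c\<bar> * sqrt (8 / pi) + 1) / sqrt (real k)"
      by (intro divide_right_mono) simp_all
    finally show "f \<mu> k \<le> (G * \<bar>c\<bar> * sqrt (8 / pi) + 1) / sqrt (real k)" .
  qed (use \<open>0 \<le> G\<close> \<open>0 < \<mu>1\<close> in \<open>auto intro!: add_nonneg_pos\<close>)
qed

theorem theorem5:
  fixes L M N Mt Nt :: nat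
    and \<tau> :: "nat \<Rightarrow> real"
    and LQ UQ QD QDt :: "real mat"
    and A At :: "complex mat"
    and TFCQ TFCA TCFQ TCFA :: "real mat"
    and nv :: "complex vec \<Rightarrow> real"
  defines "Q \<equiv> collocQ M \<tau>"
    and "TFC \<equiv> kron (1\<^sub>m L) (kron (cmat TFCQ) (cmat TFCA))"
    and "TCF \<equiv> kron (1\<^sub>m L) (kron (cmat TCFQ) (cmat TCFA))"
  assumes "0 < L" "0 < M" "0 < N" "0 < Mt" "0 < Nt" "Mt \<le> M" "Nt \<le> N"
    and "radau_right_nodes M \<tau>"
    and "LQ \<in> carrier_mat M M" "UQ \<in> carrier_mat M M"
    and "unit_lower_triangular LQ" "upper_triangular UQ"
    and "transpose_mat Q = LQ * UQ" "QD = transpose_mat UQ"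
    and "QDt \<in> carrier_mat Mt Mt" "lower_triangular QDt" "invertible_mat QDt"
    and "A \<in> carrier_mat N N" "invertible_mat A"
    and "At \<in> carrier_mat Nt Nt" "invertible_mat At"
    and "TFCQ \<in> carrier_mat Mt M" "TFCA \<in> carrier_mat Nt N"
    and "TCFQ \<in> carrier_mat M Mt" "TCFA \<in> carrier_mat N Nt"
    and "kron (shiftE L) (Hmat Mt Nt) * TFC = TFC * kron (shiftE L) (Hmat M N)"
    and "is_vec_norm (L*M*N) nv"
    and smoothing: "\<exists>c \<mu>0. \<forall>k::nat. \<forall>\<mu>::real. 1 \<le> k \<and> \<mu>0 \<le> \<mu> \<longrightarrow>
           induced_norm nv (L*M*N) (Cmat L M N Q A \<mu> * (T2mat L M N Q QD A \<mu>) ^\<^sub>m k)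
             \<le> c * sqrt (8 / (real k * pi)) * \<mu>"
  shows "\<exists>c>0. \<exists>\<mu>s>0. \<forall>k::nat. \<forall>\<mu>::real. 1 \<le> k \<and> \<mu>s \<le> \<mu> \<longrightarrow>
           induced_norm nv (L*M*N) (Tpfasst L M N Mt Nt Q QD QDt A At TCF TFC \<mu> k)
             \<le> c / sqrt (real k)"
proof -
  let ?n = "L * M * N" and ?nt = "L * Mt * Nt"
  have Q: "Q \<in> carrier_mat M M" by (simp add: Q_def collocQ_def)
  have det_Q: "det Q \<noteq> 0"
    using \<open>radau_right_nodes M \<tau>\<close> \<open>0 < M\<close> unfolding Q_def radau_right_nodes_def
    by (intro det_collocQ_nonzero) auto
  have QD: "QD \<in> carrier_mat M M" and det_QD: "det QD \<noteq> 0"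
    using det_transpose_factor_nonzero[OF Q \<open>LQ \<in> carrier_mat M M\<close> \<open>UQ \<in> carrier_mat M M\<close> det_Q
        \<open>transpose_mat Q = LQ * UQ\<close>] \<open>UQ \<in> carrier_mat M M\<close> \<open>QD = transpose_mat UQ\<close> by auto
  have det_A: "det A \<noteq> 0" "det At \<noteq> 0" "det QDt \<noteq> 0"
    using det_nonzero_if_invertible_mat \<open>A \<in> carrier_mat N N\<close> \<open>invertible_mat A\<close>
      \<open>At \<in> carrier_mat Nt Nt\<close> \<open>invertible_mat At\<close> \<open>QDt \<in> carrier_mat Mt Mt\<close> \<open>invertible_mat QDt\<close>
    by blast+
  have TFC: "TFC \<in> carrier_mat ?nt ?n" and TCF: "TCF \<in> carrier_mat ?n ?nt"
    unfolding TFC_def TCF_def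
    using \<open>TFCQ \<in> carrier_mat Mt M\<close> \<open>TFCA \<in> carrier_mat Nt N\<close> \<open>TCFQ \<in> carrier_mat M Mt\<close>
      \<open>TCFA \<in> carrier_mat N Nt\<close>
    by (auto simp: mult.assoc intro!: kron_carrier_mat cmat_carrier_mat)
  have "0 < ?n" using \<open>0 < L\<close> \<open>0 < M\<close> \<open>0 < N\<close> by simp
  obtain G \<mu>1 where "0 \<le> G" "0 < \<mu>1" and decay: "\<And>k \<mu>. \<mu>1 \<le> \<mu> \<Longrightarrow>
      induced_norm nv ?n (Tpfasst L M N Mt Nt Q QD QDt A At TCF TFC \<mu> k)
        \<le> G / \<mu> * induced_norm nv ?n (Cmat L M N Q A \<mu> * T2mat L M N Q QD A \<mu> ^\<^sub>m k)"
    using Tpfasst_norm_decay[OF \<open>is_vec_norm ?n nv\<close> \<open>0 < ?n\<close>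
        inverse_decays_Cmat[OF Q det_Q \<open>A \<in> carrier_mat N N\<close> det_A(1)]
        inverse_decays_Cmat[OF \<open>QDt \<in> carrier_mat Mt Mt\<close> det_A(3) \<open>At \<in> carrier_mat Nt Nt\<close> det_A(2),
          folded Ptilde_eq_Cmat]
        inverse_decays_P2hat[OF QD det_QD \<open>A \<in> carrier_mat N N\<close> det_A(1)] TFC TCF]
    by blast
  show ?thesis
    by (rule uniform_bound_if_smoothing[OF \<open>0 \<le> G\<close> \<open>0 < \<mu>1\<close> _ smoothing]) (rule decay)
qed

end
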